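(* For every $\varepsilon > 0$, on any instance of MDMS the algorithm $\mathrm{GIST}(V, g, k, \varepsilon)$ outputs a set $S \subseteq V$ with $|S| \le k$ and $$f(S) \ge \left(\tfrac{1}{2} - \varepsilon\right)\cdot \mathrm{OPT},$$ and it uses $O(nk \log_{1+\varepsilon}(1/\varepsilon))$ value-oracle queries to $g$.
   Context: Let $V$ be a finite set of $n$ points in a metric space with metric $\mathrm{dist}$, and let $d_{\max} = \max_{u,v \in V}\mathrm{dist}(u,v)$. For $u \in V$ and $S \subseteq V$ let $\mathrm{dist}(u,S) = \min_{v \in S}\mathrm{dist}(u,v)$, with $\mathrm{dist}(u,\emptyset) = \infty$. The max-min diversity is $\mathrm{div}(S) = \min_{u,v \in S,\, u \ne v}\mathrm{dist}(u,v)$ if $|S| \ge 2$, and $\mathrm{div}(S) = d_{\max}$ if $|S| \le 1$. Let $g : 2^V \to \mathbb{R}_{\ge 0}$ be a nonnegative monotone submodular function (accessed via a value oracle), let $\lambda \ge 0$, let $k \ge 1$ be an integer, and let $f(S) = g(S) + \lambda\cdot \mathrm{div}(S)$. The MDMS problem is to maximize $f(S)$ subject to $S \subseteq V$, $|S| \le k$; $\mathrm{OPT}$ denotes the optimal value. $\mathrm{GreedyIndependentSet}(V,g,d,k)$: initialize $S \gets \emptyset$; for $i = 1,\dots,k$: let $C = \{v \in V\setminus S : \mathrm{dist}(v,S) \ge d\}$; if $C = \emptyset$ return $S$; otherwise pick $t \in \arg\max_{v \in C} \big(g(S\cup\{v\}) - g(S)\big)$ (ties broken arbitrarily) and set $S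 \gets S \cup\{t\}$. After the loop, return $S$. $\mathrm{GIST}(V,g,k,\varepsilon)$: set $S \gets \mathrm{GreedyIndependentSet}(V,g,0,k)$. Let $T = \{u,v\}$ be two points with $\mathrm{dist}(u,v) = d_{\max}$; if $f(T) > f(S)$ and $k \ge 2$, set $S \gets T$. Let $D = \{(1+\varepsilon)^i \cdot \varepsilon d_{\max}/2 : i \in \mathbb{Z}_{\ge 0},\ (1+\varepsilon)^i \le 2/\varepsilon\}$. For each $d \in D$: set $T \gets \mathrm{GreedyIndependentSet}(V,g,d,k)$ and if $f(T) \ge f(S)$ set $S \gets T$. Return $S$. *)

theory Defs
  imports "HOL-Analysis.Analysis"
begin

definition metric_on :: "'a set \<Rightarrow> ('a \<Rightarrow> 'a \<Rightarrow> real) \<Rightarrow> bool" where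
  "metric_on V dst \<longleftrightarrow>
     (\<forall>u\<in>V. \<forall>v\<in>V. dst u v \<ge> 0 \<and> (dst u v = 0 \<longleftrightarrow> u = v) \<and> dst u v = dst v u) \<and>
     (\<forall>u\<in>V. \<forall>v\<in>V. \<forall>w\<in>V. dst u w \<le> dst u v + dst v w)"

definition nonneg_monotone_submodular :: "'a set \<Rightarrow> ('a set \<Rightarrow> real) \<Rightarrow> bool" where
  "nonneg_monotone_submodular V g \<longleftrightarrow>
     (\<forall>A. A \<subseteq> V \<longrightarrow> g A \<ge> 0) \<and>
     (\<forall>A B. A \<subseteq> B \<and> B \<subseteq> V \<longrightarrow> g A \<le> g B) \<and>
     (\<forall>A B x. A \<subseteq> B \<and> B \<subseteq> V \<and> x \<in> V - B \<longrightarrow>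
        g (insert x A) - g A \<ge> g (insert x B) - g B)"

definition mdms_instance ::
  "'a set \<Rightarrow> ('a \<Rightarrow> 'a \<Rightarrow> real) \<Rightarrow> ('a set \<Rightarrow> real) \<Rightarrow> real \<Rightarrow> nat \<Rightarrow> bool" where
  "mdms_instance V dst g lam k \<longleftrightarrow>
     finite V \<and> V \<noteq> {} \<and> metric_on V dst \<and> nonneg_monotone_submodular V g \<and> lam \<ge> 0 \<and> k \<ge> 1"

definition dmax :: "'a set \<Rightarrow> ('a \<Rightarrow> 'a \<Rightarrow> real) \<Rightarrow> real" where
  "dmax V dst = Max {dst u v | u v. u \<in> V \<and> v \<in> V}"

definition dist_set :: "('a \<Rightarrow> 'a \<Rightarrow> real) \<Rightarrow> 'a \<Rightarrow> 'a set \<Rightarrow> ereal" where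
  "dist_set dst u S = (if S = {} then \<infinity> else ereal (Min (dst u ` S)))"

definition div_mm :: "'a set \<Rightarrow> ('a \<Rightarrow> 'a \<Rightarrow> real) \<Rightarrow> 'a set \<Rightarrow> real" where
  "div_mm V dst S = (if card S \<ge> 2 then Min {dst u v | u v. u \<in> S \<and> v \<in> S \<and> u \<noteq> v}
                     else dmax V dst)"

definition mdms_f ::
  "'a set \<Rightarrow> ('a \<Rightarrow> 'a \<Rightarrow> real) \<Rightarrow> ('a set \<Rightarrow> real) \<Rightarrow> real \<Rightarrow> 'a set \<Rightarrow> real" where
  "mdms_f V dst g lam S = g S + lam * div_mm V dst S"

definition mdms_opt ::
  "'a set \<Rightarrow> ('a \<Rightarrow> 'a \<Rightarrow> real) \<Rightarrow> ('a set \<Rightarrow> real) \<Rightarrow> real \<Rightarrow> nat \<Rightarrow> real" where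
  "mdms_opt V dst g lam k = Max (mdms_f V dst g lam ` {S. S \<subseteq> V \<and> card S \<le> k})"

definition gis_cands :: "'a set \<Rightarrow> ('a \<Rightarrow> 'a \<Rightarrow> real) \<Rightarrow> real \<Rightarrow> 'a set \<Rightarrow> 'a set" where
  "gis_cands V dst r S = {v \<in> V - S. dist_set dst v S \<ge> ereal r}"

text \<open>\<open>gis_run V g dst r k S i S' q\<close>: started in state S after i completed iterations,
  the loop may terminate with output S' having made q value-oracle queries to g.
  An iteration with nonempty candidate set C queries g(S) and g(S \<union> {v}) for all v in C.\<close>
inductive gis_run ::
  "'a set \<Rightarrow> ('a set \<Rightarrow> real) \<Rightarrow> ('a \<Rightarrow> 'a \<Rightarrow> real) \<Rightarrow> real \<Rightarrow> nat \<Rightarrow>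
   'a set \<Rightarrow> nat \<Rightarrow> 'a set \<Rightarrow> nat \<Rightarrow> bool"
  for V g dst r k where
  done_loop: "\<not> i < k \<Longrightarrow> gis_run V g dst r k S i S 0"
| no_cands: "i < k \<Longrightarrow> gis_cands V dst r S = {} \<Longrightarrow> gis_run V g dst r k S i S 0"
| step: "i < k \<Longrightarrow> gis_cands V dst r S \<noteq> {} \<Longrightarrow> t \<in> gis_cands V dst r S \<Longrightarrow>
         (\<forall>v\<in>gis_cands V dst r S. g (insert v S) - g S \<le> g (insert t S) - g S) \<Longrightarrow>
         gis_run V g dst r k (insert t S) (Suc i) S' q \<Longrightarrow>
         gis_run V g dst r k S i S' (q + card (gis_cands V dst r S) + 1)"

definition greedy_indep_set ::
  "'a set \<Rightarrow> ('a set \<Rightarrow> real) \<Rightarrow> ('a \<Rightarrow> 'a \<Rightarrow> real) \<Rightarrow> real \<Rightarrow> nat \<Rightarrow> 'a set \<Rightarrow> nat \<Rightarrow> bool" where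
  "greedy_indep_set V g dst r k S q \<longleftrightarrow> gis_run V g dst r k {} 0 S q"

definition gist_D :: "'a set \<Rightarrow> ('a \<Rightarrow> 'a \<Rightarrow> real) \<Rightarrow> real \<Rightarrow> real set" where
  "gist_D V dst \<epsilon> = {(1 + \<epsilon>) ^ i * \<epsilon> * dmax V dst / 2 | i::nat. (1 + \<epsilon>) ^ i \<le> 2 / \<epsilon>}"

text \<open>The loop over the thresholds d (in the order given by the list); each comparison
  f(T) \<ge> f(S) costs two oracle queries (g(T) and g(S)).\<close>
inductive gist_loop ::
  "'a set \<Rightarrow> ('a set \<Rightarrow> real) \<Rightarrow> ('a \<Rightarrow> 'a \<Rightarrow> real) \<Rightarrow> real \<Rightarrow> nat \<Rightarrow>
   real list \<Rightarrow> 'a set \<Rightarrow> 'a set \<Rightarrow> nat \<Rightarrow> bool"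
  for V g dst lam k where
  nil: "gist_loop V g dst lam k [] S S 0"
| cons: "greedy_indep_set V g dst d k T qT \<Longrightarrow>
         gist_loop V g dst lam k ds
           (if mdms_f V dst g lam T \<ge> mdms_f V dst g lam S then T else S) S' q \<Longrightarrow>
         gist_loop V g dst lam k (d # ds) S S' (qT + 2 + q)"

text \<open>Possible executions of GIST(V,g,k,eps): any tie-breaking in the greedy steps, any choice
  of a diametral pair, and any order of iterating over D.\<close>
definition gist ::
  "'a set \<Rightarrow> ('a set \<Rightarrow> real) \<Rightarrow> ('a \<Rightarrow> 'a \<Rightarrow> real) \<Rightarrow> real \<Rightarrow> nat \<Rightarrow> real \<Rightarrow> 'a set \<Rightarrow> nat \<Rightarrow> bool" where
  "gist V g dst lam k \<epsilon> S q \<longleftrightarrow>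
     (\<exists>S0 q0 u v ds q1.
        greedy_indep_set V g dst 0 k S0 q0 \<and>
        u \<in> V \<and> v \<in> V \<and> dst u v = dmax V dst \<and>
        distinct ds \<and> set ds = gist_D V dst \<epsilon> \<and>
        gist_loop V g dst lam k ds
          (if mdms_f V dst g lam {u, v} > mdms_f V dst g lam S0 \<and> k \<ge> 2 then {u, v} else S0)
          S q1 \<and>
        q = q0 + 2 + q1)"

end

theory Submission
  imports Defs
begin

text \<open>Let T be the output of GreedyIndependentSet with threshold d and let O be a feasible set
  whose points are pairwise at least 2d apart. Each greedy step removes at most one point of O
  from the candidate set, because two such points within distance d of the chosen point would be
  closer than 2d; by submodularity the marginal value of that point at the end is at most the
  greedy gain of the step, so g(O) \<le> 2 g(T).

  Let O be optimal and \<delta> = div(O). If \<delta> \<le> \<epsilon> d_max, the unconstrained greedy run gives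
  g(O) \<le> 2 f(S), and the diametral pair (for k = 1: any set of size at most one) gives
  \<lambda> d_max \<le> f(S), so f(O) \<le> (2 + \<epsilon>) f(S). Otherwise the geometric grid D contains a d with
  2d \<le> \<delta> < 2(1 + \<epsilon>)d; the run at threshold d is d-separated, hence f(O) \<le> 2(1 + \<epsilon>) f(S).
  Since (1/2 - \<epsilon>) 2(1 + \<epsilon>) \<le> 1 the approximation bound follows. The grid has O(log_{1+\<epsilon>}(1/\<epsilon>))
  points and each greedy run makes at most k(n + 1) queries.\<close>

lemma metric_on_nonneg: "metric_on V dst \<Longrightarrow> u \<in> V \<Longrightarrow> v \<in> V \<Longrightarrow> 0 \<le> dst u v"
  unfolding metric_on_def by simp

lemma metric_on_sym: "metric_on V dst \<Longrightarrow> u \<in> V \<Longrightarrow> v \<in> V \<Longrightarrow> dst u v = dst v u"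
  unfolding metric_on_def by simp

lemma nms_nonneg: "nonneg_monotone_submodular V g \<Longrightarrow> A \<subseteq> V \<Longrightarrow> 0 \<le> g A"
  unfolding nonneg_monotone_submodular_def by simp

lemma nms_mono: "nonneg_monotone_submodular V g \<Longrightarrow> A \<subseteq> B \<Longrightarrow> B \<subseteq> V \<Longrightarrow> g A \<le> g B"
  unfolding nonneg_monotone_submodular_def by simp

lemma nms_diminishing_returns:
  "nonneg_monotone_submodular V g \<Longrightarrow> A \<subseteq> B \<Longrightarrow> B \<subseteq> V \<Longrightarrow> x \<in> V \<Longrightarrow> x \<notin> B \<Longrightarrow>
   g (insert x B) - g B \<le> g (insert x A) - g A"
  unfolding nonneg_monotone_submodular_def by simp

lemma nms_marginal_antimono:
  assumes nms: "nonneg_monotone_submodular V g" and "A \<subseteq> B" "B \<subseteq> V" "x \<in> V"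
  shows "g (insert x B) - g B \<le> g (insert x A) - g A"
proof (cases "x \<in> B")
  case True
  have "g A \<le> g (insert x A)" using nms_mono[OF nms, of A "insert x A"] assms by blast
  with True show ?thesis by (simp add: insert_absorb)
qed (use nms_diminishing_returns[OF nms] assms in blast)

lemma nms_union_le_sum_marginals:
  assumes nms: "nonneg_monotone_submodular V g" and "T \<subseteq> V" "finite B" "B \<subseteq> V"
  shows "g (T \<union> B) \<le> g T + (\<Sum>x\<in>B. g (insert x T) - g T)"
  using \<open>finite B\<close> \<open>B \<subseteq> V\<close>
proof (induction B rule: finite_induct)
  case (insert x B)
  then have "g (insert x (T \<union> B)) - g (T \<union> B) \<le> g (insert x T) - g T"
    using nms_marginal_antimono[OF nms, of T "T \<union> B" x] \<open>T \<subseteq> V\<close> by simp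
  with insert show ?case by simp
qed simp

definition separated :: "('a \<Rightarrow> 'a \<Rightarrow> real) \<Rightarrow> real \<Rightarrow> 'a set \<Rightarrow> bool" where
  "separated dst r A \<longleftrightarrow> (\<forall>x\<in>A. \<forall>y\<in>A. x \<noteq> y \<longrightarrow> r \<le> dst x y)"

lemma separated_mono: "separated dst r A \<Longrightarrow> r' \<le> r \<Longrightarrow> separated dst r' A"
  unfolding separated_def by (meson order_trans)

lemma separated_zero: "metric_on V dst \<Longrightarrow> A \<subseteq> V \<Longrightarrow> separated dst 0 A"
  unfolding separated_def by (meson metric_on_nonneg subsetD)

lemma separated_unique_close_point:
  assumes met: "metric_on V dst" and "0 \<le> r" and sep: "separated dst (2 * r) A" and "A \<subseteq> V" "t \<in> V"
    and y: "y \<in> A" "y = t \<or> dst y t < r" and w: "w \<in> A" "w = t \<or> dst w t < r"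
  shows "y = w"
proof (rule ccontr)
  assume "y \<noteq> w"
  with sep y w have "2 * r \<le> dst y w" unfolding separated_def by blast
  moreover have "y \<in> V" "w \<in> V" using y w \<open>A \<subseteq> V\<close> by auto
  then have "dst y w \<le> dst y t + dst w t" "dst t t = 0" "0 \<le> dst y t" "0 \<le> dst w t"
    using met \<open>t \<in> V\<close> unfolding metric_on_def by metis+
  ultimately show False using \<open>y \<noteq> w\<close> \<open>0 \<le> r\<close> y w by auto
qed

section \<open>GreedyIndependentSet\<close>

lemma gis_cands_iff:
  assumes "finite S"
  shows "v \<in> gis_cands V dst r S \<longleftrightarrow> v \<in> V \<and> v \<notin> S \<and> (\<forall>s\<in>S. r \<le> dst v s)"
  using assms by (cases "S = {}") (auto simp: gis_cands_def dist_set_def)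

lemma gis_cands_subset: "gis_cands V dst r S \<subseteq> V"
  by (auto simp: gis_cands_def)

lemma gis_cands_memD: "v \<in> gis_cands V dst r S \<Longrightarrow> v \<in> V \<and> v \<notin> S"
  by (auto simp: gis_cands_def)

lemma gis_cands_empty: "gis_cands V dst r {} = V"
  by (auto simp: gis_cands_def dist_set_def)

lemma gis_cands_insert_all_but_one:
  assumes met: "metric_on V dst" and "0 \<le> r" and "finite S" "t \<in> V"
    and sep: "separated dst (2 * r) A" "A \<subseteq> V"
    and B: "B \<subseteq> A \<inter> gis_cands V dst r S" "B \<noteq> {}"
  obtains z where "z \<in> B" "B - {z} \<subseteq> gis_cands V dst r (insert t S)"
proof -
  let ?C' = "gis_cands V dst r (insert t S)"
  have close: "x = t \<or> dst x t < r" if "x \<in> B" "x \<notin> ?C'" for x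
    using that B \<open>finite S\<close> by (auto simp: gis_cands_iff)
  show thesis
  proof (cases "B \<subseteq> ?C'")
    case True
    with B that show thesis by blast
  next
    case False
    then obtain y where y: "y \<in> B" "y \<notin> ?C'" by blast
    have "B - {y} \<subseteq> ?C'"
      using separated_unique_close_point[OF met \<open>0 \<le> r\<close> sep \<open>t \<in> V\<close>] close y B(1) by blast
    with y that show thesis by blast
  qed
qed

lemma finite_obtain_argmax:
  fixes h :: "'a \<Rightarrow> 'b::linorder"
  assumes "finite C" "C \<noteq> {}"
  obtains t where "t \<in> C" "\<forall>v\<in>C. h v \<le> h t"
proof -
  have "Max (h ` C) \<in> h ` C" using assms by simp
  then obtain t where "t \<in> C" "h t = Max (h ` C)" by auto
  then show thesis using that assms by simp
qed

lemma gis_run_exists: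
  assumes "finite V"
  shows "\<exists>S' q. gis_run V g dst r k S i S' q"
proof (induction "k - i" arbitrary: S i rule: less_induct)
  case less
  let ?C = "gis_cands V dst r S"
  consider "\<not> i < k" | "i < k" "?C = {}" | "i < k" "?C \<noteq> {}" by blast
  then show ?case
  proof cases
    case 1
    then show ?thesis using gis_run.done_loop by blast
  next
    case 2
    then show ?thesis using gis_run.no_cands by blast
  next
    case 3
    have "finite ?C" using assms gis_cands_subset by (rule finite_subset[rotated])
    then obtain t where t: "t \<in> ?C" "\<forall>v\<in>?C. g (insert v S) - g S \<le> g (insert t S) - g S"
      using finite_obtain_argmax[where h = "\<lambda>v. g (insert v S) - g S", OF _ 3(2)] by blast
    have "k - Suc i < k - i" using 3(1) by simp
    then obtain S' q where "gis_run V g dst r k (insert t S) (Suc i) S' q"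
      using less.hyps by blast
    then have "gis_run V g dst r k S i S' (q + card ?C + 1)"
      by (rule gis_run.step[OF 3 t])
    then show ?thesis by blast
  qed
qed

lemma gis_run_subset:
  "gis_run V g dst r k S i S' q \<Longrightarrow> S \<subseteq> V \<Longrightarrow> S \<subseteq> S' \<and> S' \<subseteq> V"
proof (induction rule: gis_run.induct)
  case (step i S t S' q)
  have "insert t S \<subseteq> V" using gis_cands_memD[OF step.hyps(3)] step.prems by simp
  then show ?case using step.IH by blast
qed simp_all

lemma gis_run_card_queries:
  "gis_run V g dst r k S i S' q \<Longrightarrow> finite V \<Longrightarrow> S \<subseteq> V \<Longrightarrow> card S \<le> i \<Longrightarrow> i \<le> k \<Longrightarrow>
   card S' \<le> k \<and> q \<le> (k - i) * (card V + 1)"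
proof (induction rule: gis_run.induct)
  case (step i S t S' q)
  have "t \<in> V" "t \<notin> S" using gis_cands_memD[OF step.hyps(3)] by simp_all
  moreover have "finite S" using step.prems finite_subset by blast
  ultimately have "card S' \<le> k \<and> q \<le> (k - Suc i) * (card V + 1)"
    using step.prems step.hyps(1) by (intro step.IH) simp_all
  moreover have "card (gis_cands V dst r S) \<le> card V"
    using card_mono[OF step.prems(1) gis_cands_subset] .
  moreover have "k - i = Suc (k - Suc i)" using \<open>i < k\<close> by simp
  then have "(k - i) * (card V + 1) = (k - Suc i) * (card V + 1) + card V + 1" by simp
  ultimately show ?case by linarith
qed auto

lemma gis_run_separated:
  "gis_run V g dst r k S i S' q \<Longrightarrow> finite V \<Longrightarrow> metric_on V dst \<Longrightarrow> S \<subseteq> V \<Longrightarrow>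
   separated dst r S \<Longrightarrow> separated dst r S'"
proof (induction rule: gis_run.induct)
  case (step i S t S' q)
  have "finite S" using step.prems(3,1) by (rule finite_subset)
  then have t: "t \<in> V" "\<forall>s\<in>S. r \<le> dst t s" using step.hyps(3) by (auto simp: gis_cands_iff)
  moreover have "\<forall>s\<in>S. dst s t = dst t s"
    using metric_on_sym[OF step.prems(2) _ t(1)] step.prems(3) by blast
  ultimately have "separated dst r (insert t S)" using step.prems(4) unfolding separated_def by auto
  then show ?case using step t(1) by simp
qed auto

text \<open>Every point of A that is still a candidate is charged to the greedy gain of the step that
  removes it from the candidate set; by separation each step removes at most one such point.\<close>
lemma gis_run_marginal_sum:
  assumes nms: "nonneg_monotone_submodular V g" and met: "metric_on V dst" and "0 \<le> r"
    and "finite V" and A: "A \<subseteq> V" "separated dst (2 * r) A"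
  shows "gis_run V g dst r k S i S' q \<Longrightarrow> S \<subseteq> V \<Longrightarrow> B \<subseteq> A \<inter> gis_cands V dst r S \<Longrightarrow>
    card B + i \<le> k \<Longrightarrow> (\<Sum>x\<in>B. g (insert x S') - g S') \<le> g S' - g S"
proof (induction arbitrary: B rule: gis_run.induct)
  case (done_loop i S)
  have "B \<subseteq> V" using done_loop.prems(2) A(1) by blast
  then have "finite B" using \<open>finite V\<close> by (rule finite_subset)
  moreover have "card B = 0" using done_loop by simp
  ultimately show ?case by simp
next
  case (step i S t S' q)
  have t: "t \<in> V" "t \<notin> S" using gis_cands_memD[OF step.hyps(3)] by simp_all
  have "finite S" using step.prems(1) \<open>finite V\<close> by (rule finite_subset)
  have S': "insert t S \<subseteq> S'" "S' \<subseteq> V" using gis_run_subset[OF step.hyps(5)] t step.prems(1) by auto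
  show ?case
  proof (cases "B = {}")
    case True
    then show ?thesis using nms_mono[OF nms, of S S'] S' by auto
  next
    case False
    obtain z where z: "z \<in> B" "B - {z} \<subseteq> gis_cands V dst r (insert t S)"
      using gis_cands_insert_all_but_one[OF met \<open>0 \<le> r\<close> \<open>finite S\<close> t(1) A(2,1) step.prems(2) False] .
    have "B \<subseteq> V" using step.prems(2) A(1) by blast
    then have "finite B" using \<open>finite V\<close> by (rule finite_subset)
    have "z \<in> V" using z(1) \<open>B \<subseteq> V\<close> by blast
    have "(\<Sum>x\<in>B - {z}. g (insert x S') - g S') \<le> g S' - g (insert t S)"
    proof (rule step.IH)
      show "insert t S \<subseteq> V" using t step.prems(1) by blast
      show "B - {z} \<subseteq> A \<inter> gis_cands V dst r (insert t S)" using z step.prems(2) by blast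
      show "card (B - {z}) + Suc i \<le> k"
        using step.prems(3) z(1) \<open>finite B\<close> card_Diff1_less[OF \<open>finite B\<close> z(1)] by simp
    qed
    moreover have "g (insert z S') - g S' \<le> g (insert z S) - g S"
      using nms_marginal_antimono[OF nms, of S S' z] S' \<open>z \<in> V\<close> by auto
    moreover have "g (insert z S) - g S \<le> g (insert t S) - g S"
      using step.hyps(4) z(1) step.prems(2) by blast
    ultimately show ?thesis
      using sum.remove[OF \<open>finite B\<close> z(1), of "\<lambda>x. g (insert x S') - g S'"] by linarith
  qed
qed simp

lemma greedy_indep_set_feasible_queries:
  assumes "greedy_indep_set V g dst r k T q" "finite V"
  shows "T \<subseteq> V" "card T \<le> k" "q \<le> k * (card V + 1)"
  using assms gis_run_subset[of V g dst r k "{}" 0 T q] gis_run_card_queries[of V g dst r k "{}" 0 T q]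
  unfolding greedy_indep_set_def by auto

lemma greedy_indep_set_separated:
  assumes "greedy_indep_set V g dst r k T q" "finite V" "metric_on V dst"
  shows "separated dst r T"
  using assms gis_run_separated[of V g dst r k "{}" 0 T q]
  unfolding greedy_indep_set_def separated_def by simp

lemma greedy_indep_set_half:
  assumes nms: "nonneg_monotone_submodular V g" and met: "metric_on V dst" and "0 \<le> r"
    and "finite V" and A: "A \<subseteq> V" "card A \<le> k" "separated dst (2 * r) A"
    and T: "greedy_indep_set V g dst r k T q"
  shows "g A \<le> 2 * g T"
proof -
  have "T \<subseteq> V" using greedy_indep_set_feasible_queries[OF T \<open>finite V\<close>] by simp
  have "(\<Sum>x\<in>A. g (insert x T) - g T) \<le> g T - g {}"
    using gis_run_marginal_sum[OF nms met \<open>0 \<le> r\<close> \<open>finite V\<close> A(1,3), of k "{}" 0 T q A] T A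
    unfolding greedy_indep_set_def gis_cands_empty by simp
  moreover have "g (T \<union> A) \<le> g T + (\<Sum>x\<in>A. g (insert x T) - g T)"
    using nms_union_le_sum_marginals[OF nms \<open>T \<subseteq> V\<close> finite_subset[OF A(1) \<open>finite V\<close>] A(1)] .
  moreover have "g A \<le> g (T \<union> A)" "0 \<le> g {}"
    using nms_mono[OF nms] nms_nonneg[OF nms] \<open>T \<subseteq> V\<close> A(1) by auto
  ultimately show ?thesis by linarith
qed

section \<open>Diversity and the objective\<close>

lemma finite_dst_pairs: "finite V \<Longrightarrow> finite {dst u v | u v. u \<in> V \<and> v \<in> V}"
proof -
  have "{dst u v | u v. u \<in> V \<and> v \<in> V} = (\<lambda>(u, v). dst u v) ` (V \<times> V)" by auto
  then show "finite V \<Longrightarrow> ?thesis" by simp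
qed

lemma dmax_ge: "finite V \<Longrightarrow> u \<in> V \<Longrightarrow> v \<in> V \<Longrightarrow> dst u v \<le> dmax V dst"
  unfolding dmax_def by (intro Max_ge finite_dst_pairs) blast+

lemma dmax_attained:
  assumes "finite V" "V \<noteq> {}"
  obtains u v where "u \<in> V" "v \<in> V" "dst u v = dmax V dst"
proof -
  have "dmax V dst \<in> {dst u v | u v. u \<in> V \<and> v \<in> V}"
    unfolding dmax_def using assms by (intro Max_in finite_dst_pairs) auto
  then show thesis using that by auto
qed

lemma dmax_nonneg:
  assumes "finite V" "V \<noteq> {}" "metric_on V dst"
  shows "0 \<le> dmax V dst"
proof -
  obtain u v where "u \<in> V" "v \<in> V" "dst u v = dmax V dst" using dmax_attained[OF assms(1,2)] .
  then show ?thesis using metric_on_nonneg[OF assms(3)] by metis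
qed

lemma finite_dst_distinct_pairs:
  "finite S \<Longrightarrow> finite {dst u v | u v. u \<in> S \<and> v \<in> S \<and> u \<noteq> v}"
  by (rule finite_subset[OF _ finite_dst_pairs]) auto

lemma obtain_two_distinct:
  assumes "finite S" "2 \<le> card S"
  obtains x y where "x \<in> S" "y \<in> S" "x \<noteq> y"
proof -
  have "\<not> card S \<le> Suc 0" using assms(2) by simp
  then show thesis using that card_le_Suc0_iff_eq[OF assms(1)] by blast
qed

lemma separated_div_mm: "finite S \<Longrightarrow> separated dst (div_mm V dst S) S"
proof (unfold separated_def, intro ballI impI)
  fix x y assume "finite S" "x \<in> S" "y \<in> S" "x \<noteq> y"
  moreover from this have "2 \<le> card S"
    using card_mono[of S "{x, y}"] by simp
  moreover have "Min {dst u v | u v. u \<in> S \<and> v \<in> S \<and> u \<noteq> v} \<le> dst x y"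
    using calculation by (intro Min_le finite_dst_distinct_pairs) auto
  ultimately show "div_mm V dst S \<le> dst x y" unfolding div_mm_def by simp
qed

lemma div_mm_ge:
  assumes "finite S" "separated dst d S" "d \<le> dmax V dst"
  shows "d \<le> div_mm V dst S"
proof (cases "2 \<le> card S")
  case True
  then obtain x y where "x \<in> S" "y \<in> S" "x \<noteq> y"
    using obtain_two_distinct[OF \<open>finite S\<close>] by blast
  then have "{dst u v | u v. u \<in> S \<and> v \<in> S \<and> u \<noteq> v} \<noteq> {}" by blast
  with assms True show ?thesis
    unfolding div_mm_def separated_def by (auto simp: finite_dst_distinct_pairs)
qed (use assms in \<open>simp add: div_mm_def\<close>)

lemma div_mm_le_dmax:
  assumes "finite V" "S \<subseteq> V"
  shows "div_mm V dst S \<le> dmax V dst"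
proof (cases "2 \<le> card S")
  case True
  have "finite S" using assms by (rule finite_subset[rotated])
  then obtain x y where "x \<in> S" "y \<in> S" "x \<noteq> y"
    using obtain_two_distinct[OF _ True] by blast
  then have "div_mm V dst S \<le> dst x y"
    using separated_div_mm[OF \<open>finite S\<close>] unfolding separated_def by blast
  also have "\<dots> \<le> dmax V dst" using \<open>x \<in> S\<close> \<open>y \<in> S\<close> assms by (intro dmax_ge) auto
  finally show ?thesis .
qed (simp add: div_mm_def)

lemma div_mm_nonneg:
  assumes "finite V" "V \<noteq> {}" "metric_on V dst" "S \<subseteq> V"
  shows "0 \<le> div_mm V dst S"
  using div_mm_ge[OF finite_subset[OF assms(4,1)] separated_zero[OF assms(3,4)]]
    dmax_nonneg[OF assms(1-3)] .

lemma div_mm_diametral_pair: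
  assumes "finite V" "metric_on V dst" "u \<in> V" "v \<in> V" "dst u v = dmax V dst"
  shows "div_mm V dst {u, v} = dmax V dst"
proof (rule antisym)
  show "div_mm V dst {u, v} \<le> dmax V dst" using assms by (intro div_mm_le_dmax) auto
  have "separated dst (dmax V dst) {u, v}"
    using assms metric_on_sym[OF assms(2-4)] unfolding separated_def by auto
  then show "dmax V dst \<le> div_mm V dst {u, v}" by (intro div_mm_ge) auto
qed

lemma mdms_instanceD:
  assumes "mdms_instance V dst g lam k"
  shows "finite V" "V \<noteq> {}" "metric_on V dst" "nonneg_monotone_submodular V g" "0 \<le> lam" "1 \<le> k"
  using assms unfolding mdms_instance_def by auto

lemma mdms_f_lower_bounds:
  assumes inst: "mdms_instance V dst g lam k" and "S \<subseteq> V"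
  shows "g S \<le> mdms_f V dst g lam S" "lam * div_mm V dst S \<le> mdms_f V dst g lam S"
    and "0 \<le> mdms_f V dst g lam S"
proof -
  have "0 \<le> lam * div_mm V dst S"
    using div_mm_nonneg[OF mdms_instanceD(1-3)[OF inst] \<open>S \<subseteq> V\<close>] mdms_instanceD(5)[OF inst] by simp
  moreover have "0 \<le> g S" using nms_nonneg[OF mdms_instanceD(4)[OF inst] \<open>S \<subseteq> V\<close>] .
  ultimately show "g S \<le> mdms_f V dst g lam S" "lam * div_mm V dst S \<le> mdms_f V dst g lam S"
    and "0 \<le> mdms_f V dst g lam S" unfolding mdms_f_def by simp_all
qed

lemma mdms_opt_attained:
  assumes "finite V"
  obtains A where "A \<subseteq> V" "card A \<le> k" "mdms_f V dst g lam A = mdms_opt V dst g lam k"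
proof -
  let ?F = "{A. A \<subseteq> V \<and> card A \<le> k}"
  have "finite ?F" using assms by simp
  moreover have "{} \<in> ?F" by simp
  ultimately have "mdms_opt V dst g lam k \<in> mdms_f V dst g lam ` ?F"
    unfolding mdms_opt_def by (intro Max_in finite_imageI) blast+
  then show thesis using that by auto
qed

section \<open>The threshold grid\<close>

lemma pow_le_imp_le_log:
  fixes b R :: real
  assumes "1 < b" "b ^ i \<le> R"
  shows "real i \<le> log b R"
proof -
  have "0 < R" using assms by (smt (verit) zero_less_power)
  then show ?thesis using assms by (simp add: le_log_iff powr_realpow)
qed

lemma pow_le_subset_atMost:
  fixes b R :: real
  assumes "1 < b"
  shows "{i::nat. b ^ i \<le> R} \<subseteq> {..nat \<lfloor>log b R\<rfloor>}"
proof
  fix i assume "i \<in> {i::nat. b ^ i \<le> R}"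
  then have "real i \<le> log b R" using pow_le_imp_le_log[OF assms] by simp
  then show "i \<in> {..nat \<lfloor>log b R\<rfloor>}" by (simp add: le_nat_iff le_floor_iff)
qed

lemma finite_pow_le: "1 < (b::real) \<Longrightarrow> finite {i::nat. b ^ i \<le> R}"
  using finite_subset[OF pow_le_subset_atMost finite_atMost] .

lemma card_pow_le:
  fixes b R :: real
  assumes "1 < b" "1 \<le> R"
  shows "real (card {i::nat. b ^ i \<le> R}) \<le> log b R + 1"
proof -
  have "card {i::nat. b ^ i \<le> R} \<le> nat \<lfloor>log b R\<rfloor> + 1"
    using card_mono[OF _ pow_le_subset_atMost[OF assms(1)]] by simp
  moreover have "real (nat \<lfloor>log b R\<rfloor>) \<le> log b R" using assms by simp
  ultimately show ?thesis by linarith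
qed

lemma exists_pow_bracket:
  fixes b R :: real
  assumes "1 < b" "1 \<le> R"
  obtains i :: nat where "b ^ i \<le> R" "R < b ^ Suc i"
proof
  let ?i = "nat \<lfloor>log b R\<rfloor>"
  have pos: "0 < b" "0 < R" using assms by auto
  have "0 \<le> log b R" using assms by simp
  then have "real ?i \<le> log b R" "log b R < real (Suc ?i)" by linarith+
  then show "b ^ ?i \<le> R" "R < b ^ Suc ?i"
    using le_log_iff[OF assms(1) pos(2)] log_less_iff[OF assms(1) pos(2)] powr_realpow[OF pos(1)]
    by metis+
qed

lemma gist_D_eq_image:
  "gist_D V dst e = (\<lambda>i. (1 + e) ^ i * e * dmax V dst / 2) ` {i::nat. (1 + e) ^ i \<le> 2 / e}"
  unfolding gist_D_def by auto

lemma one_le_log_inverse: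
  fixes e :: real
  assumes "0 < e" "e \<le> 1/2"
  shows "1 \<le> log (1 + e) (1 / e)"
proof -
  have "e * e \<le> e * (1/2)" using assms by (intro mult_left_mono) auto
  then have "e + e * e \<le> 1" using assms by linarith
  then have "1 + e \<le> 1 / e" using assms by (simp add: field_simps)
  then show ?thesis using assms by simp
qed

lemma finite_gist_D: "0 < e \<Longrightarrow> finite (gist_D V dst e)"
  unfolding gist_D_eq_image by (simp add: finite_pow_le)

lemma card_gist_D_le:
  assumes "0 < e" "e \<le> 1/2"
  shows "real (card (gist_D V dst e)) \<le> 3 * log (1 + e) (1 / e)"
proof -
  have "1 < 1 + e" "1 \<le> 2 / e" using assms by (simp_all add: field_simps)
  have "card (gist_D V dst e) \<le> card {i::nat. (1 + e) ^ i \<le> 2 / e}"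
    unfolding gist_D_eq_image by (rule card_image_le[OF finite_pow_le[OF \<open>1 < 1 + e\<close>]])
  moreover have "log (1 + e) (2 / e) = log (1 + e) 2 + log (1 + e) (1 / e)"
    using assms log_mult[of "1 + e" 2 "1 / e"] by simp
  moreover have "log (1 + e) 2 \<le> log (1 + e) (1 / e)" using assms by (simp add: field_simps)
  ultimately show ?thesis
    using card_pow_le[OF \<open>1 < 1 + e\<close> \<open>1 \<le> 2 / e\<close>] one_le_log_inverse[OF assms] by linarith
qed

lemma gist_threshold_bracket:
  assumes "0 < e" "0 \<le> dmax V dst" "e * dmax V dst < \<delta>" "\<delta> \<le> dmax V dst"
  obtains d where "d \<in> gist_D V dst e" "0 \<le> d" "2 * d \<le> \<delta>" "\<delta> < 2 * (1 + e) * d"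
proof -
  let ?u = "e * dmax V dst"
  have "0 < ?u" using assms by (smt (verit) mult_pos_pos mult_nonneg_nonneg)
  have "1 \<le> \<delta> / ?u" "\<delta> / ?u \<le> 1 / e" using assms \<open>0 < ?u\<close> by (simp_all add: field_simps)
  have "1 < 1 + e" using assms(1) by simp
  then obtain i where i: "(1 + e) ^ i \<le> \<delta> / ?u" "\<delta> / ?u < (1 + e) ^ Suc i"
    using exists_pow_bracket \<open>1 \<le> \<delta> / ?u\<close> by blast
  let ?d = "(1 + e) ^ i * e * dmax V dst / 2"
  show thesis
  proof
    have "1 / e \<le> 2 / e" using assms(1) by (simp add: divide_right_mono)
    then show "?d \<in> gist_D V dst e"
      unfolding gist_D_def using i(1) \<open>\<delta> / ?u \<le> 1 / e\<close> by fastforce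
    show "0 \<le> ?d" using assms(1,2) by simp
    show "2 * ?d \<le> \<delta>" "\<delta> < 2 * (1 + e) * ?d"
      using i \<open>0 < ?u\<close> by (simp_all add: field_simps)
  qed
qed

section \<open>GIST\<close>

lemma gist_loop_exists: "finite V \<Longrightarrow> \<exists>S q. gist_loop V g dst lam k ds S0 S q"
proof (induction ds arbitrary: S0)
  case Nil
  show ?case using gist_loop.nil by blast
next
  case (Cons d ds)
  obtain T qT where T: "greedy_indep_set V g dst d k T qT"
    using gis_run_exists[OF Cons.prems] unfolding greedy_indep_set_def by blast
  obtain S q where "gist_loop V g dst lam k ds
      (if mdms_f V dst g lam T \<ge> mdms_f V dst g lam S0 then T else S0) S q"
    using Cons.IH[OF Cons.prems] by blast
  then have "gist_loop V g dst lam k (d # ds) S0 S (qT + 2 + q)" by (rule gist_loop.cons[OF T])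
  then show ?case by blast
qed

lemma gist_loop_feasible:
  "gist_loop V g dst lam k ds S0 S q \<Longrightarrow> finite V \<Longrightarrow> S0 \<subseteq> V \<Longrightarrow> card S0 \<le> k \<Longrightarrow>
   S \<subseteq> V \<and> card S \<le> k"
proof (induction rule: gist_loop.induct)
  case (cons d T qT ds S S' q)
  then show ?case using greedy_indep_set_feasible_queries[OF cons.hyps(1)] by (intro cons.IH) simp_all
qed simp

lemma gist_loop_improves:
  "gist_loop V g dst lam k ds S0 S q \<Longrightarrow> mdms_f V dst g lam S0 \<le> mdms_f V dst g lam S"
  by (induction rule: gist_loop.induct) (auto split: if_splits)

lemma gist_loop_covers:
  "gist_loop V g dst lam k ds S0 S q \<Longrightarrow> d \<in> set ds \<Longrightarrow>
   \<exists>T qT. greedy_indep_set V g dst d k T qT \<and> mdms_f V dst g lam T \<le> mdms_f V dst g lam S"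
proof (induction rule: gist_loop.induct)
  case (cons d' T qT ds S S' q)
  have "mdms_f V dst g lam T \<le> mdms_f V dst g lam S'"
    using gist_loop_improves[OF cons.hyps(2)] by (auto split: if_splits)
  then show ?case using cons by auto
qed simp

lemma gist_loop_queries:
  "gist_loop V g dst lam k ds S0 S q \<Longrightarrow> finite V \<Longrightarrow> q \<le> length ds * (k * (card V + 1) + 2)"
proof (induction rule: gist_loop.induct)
  case (cons d T qT ds S S' q)
  then show ?case using greedy_indep_set_feasible_queries(3)[OF cons.hyps(1)] by simp
qed simp

lemma gist_exists:
  assumes inst: "mdms_instance V dst g lam k" and "0 < e"
  shows "\<exists>S q. gist V g dst lam k e S q"
proof -
  note V = mdms_instanceD(1,2)[OF inst]
  obtain S0 q0 where "greedy_indep_set V g dst 0 k S0 q0"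
    using gis_run_exists[OF V(1)] unfolding greedy_indep_set_def by blast
  moreover obtain u v where "u \<in> V" "v \<in> V" "dst u v = dmax V dst" using dmax_attained[OF V] .
  moreover obtain ds where "distinct ds" "set ds = gist_D V dst e"
    using finite_distinct_list[OF finite_gist_D[OF \<open>0 < e\<close>]] by blast
  moreover obtain S q1 where "gist_loop V g dst lam k ds
      (if mdms_f V dst g lam {u, v} > mdms_f V dst g lam S0 \<and> k \<ge> 2 then {u, v} else S0) S q1"
    using gist_loop_exists[OF V(1)] by blast
  ultimately have "gist V g dst lam k e S (q0 + 2 + q1)" unfolding gist_def by blast
  then show ?thesis by blast
qed

text \<open>The initial set I of the threshold loop: for k \<ge> 2 it is at least as good as a diametral
  pair, for k = 1 it is the unconstrained greedy set, whose diversity is d_max by convention.\<close>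
lemma gist_cases:
  assumes inst: "mdms_instance V dst g lam k" and "gist V g dst lam k e S q"
  obtains S0 q0 I ds q1 where "greedy_indep_set V g dst 0 k S0 q0"
    "I \<subseteq> V" "card I \<le> k" "mdms_f V dst g lam S0 \<le> mdms_f V dst g lam I"
    "lam * dmax V dst \<le> mdms_f V dst g lam I"
    "distinct ds" "set ds = gist_D V dst e" "gist_loop V g dst lam k ds I S q1" "q = q0 + 2 + q1"
proof -
  let ?f = "mdms_f V dst g lam"
  note V = mdms_instanceD(1-3)[OF inst]
  obtain S0 q0 u v ds q1 where S0: "greedy_indep_set V g dst 0 k S0 q0"
    and uv: "u \<in> V" "v \<in> V" "dst u v = dmax V dst"
    and rest: "distinct ds" "set ds = gist_D V dst e"
      "gist_loop V g dst lam k ds (if ?f {u, v} > ?f S0 \<and> k \<ge> 2 then {u, v} else S0) S q1"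
      "q = q0 + 2 + q1"
    using \<open>gist V g dst lam k e S q\<close> unfolding gist_def by blast
  define I where "I = (if ?f {u, v} > ?f S0 \<and> k \<ge> 2 then {u, v} else S0)"
  note S0V = greedy_indep_set_feasible_queries(1,2)[OF S0 V(1)]
  have "card {u, v} \<le> 2" by (simp add: card_insert_le_m1)
  then have I: "I \<subseteq> V" "card I \<le> k" using S0V uv unfolding I_def by auto
  have "?f S0 \<le> ?f I" unfolding I_def by simp
  moreover have "lam * dmax V dst \<le> ?f I"
  proof (cases "k \<ge> 2")
    case True
    have "lam * dmax V dst \<le> ?f {u, v}"
      using mdms_f_lower_bounds(2)[OF inst, of "{u, v}"] div_mm_diametral_pair[OF V(1,3) uv] uv
      by simp
    also have "\<dots> \<le> ?f I" using True unfolding I_def by simp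
    finally show ?thesis .
  next
    case False
    then have "I = S0" "div_mm V dst S0 = dmax V dst"
      using S0V unfolding I_def div_mm_def by auto
    then show ?thesis using mdms_f_lower_bounds(2)[OF inst S0V(1)] by simp
  qed
  ultimately show thesis using that S0 I rest unfolding I_def by blast
qed

lemma gist_feasible:
  assumes inst: "mdms_instance V dst g lam k" and "gist V g dst lam k e S q"
  shows "S \<subseteq> V" "card S \<le> k"
proof -
  obtain I ds q1 where "I \<subseteq> V" "card I \<le> k" "gist_loop V g dst lam k ds I S q1"
    using gist_cases[OF assms] by metis
  then show "S \<subseteq> V" "card S \<le> k" using gist_loop_feasible mdms_instanceD(1)[OF inst] by metis+
qed

lemma gist_lam_dmax_le:
  assumes inst: "mdms_instance V dst g lam k" and "gist V g dst lam k e S q"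
  shows "lam * dmax V dst \<le> mdms_f V dst g lam S"
proof -
  obtain I ds q1 where "lam * dmax V dst \<le> mdms_f V dst g lam I" "gist_loop V g dst lam k ds I S q1"
    using gist_cases[OF assms] by metis
  then show ?thesis using gist_loop_improves order_trans by metis
qed

lemma gist_dominates_greedy:
  assumes inst: "mdms_instance V dst g lam k" and "gist V g dst lam k e S q"
    and "d = 0 \<or> d \<in> gist_D V dst e"
  shows "\<exists>T qT. greedy_indep_set V g dst d k T qT \<and> mdms_f V dst g lam T \<le> mdms_f V dst g lam S"
proof -
  obtain S0 q0 I ds q1 where "greedy_indep_set V g dst 0 k S0 q0"
    "mdms_f V dst g lam S0 \<le> mdms_f V dst g lam I"
    "set ds = gist_D V dst e" "gist_loop V g dst lam k ds I S q1"
    using gist_cases[OF assms(1,2)] by metis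
  then show ?thesis
    using assms(3) gist_loop_improves gist_loop_covers by (metis order_trans)
qed

lemma gist_queries:
  assumes inst: "mdms_instance V dst g lam k" and "gist V g dst lam k e S q"
  shows "q \<le> (card (gist_D V dst e) + 1) * (k * (card V + 1) + 2)"
proof -
  obtain S0 q0 I ds q1 where S0: "greedy_indep_set V g dst 0 k S0 q0"
    and ds: "distinct ds" "set ds = gist_D V dst e"
    and L: "gist_loop V g dst lam k ds I S q1" and q: "q = q0 + 2 + q1"
    using gist_cases[OF assms] by metis
  note V = mdms_instanceD(1)[OF inst]
  have "q0 \<le> k * (card V + 1)" using greedy_indep_set_feasible_queries(3)[OF S0 V] .
  moreover have "q1 \<le> length ds * (k * (card V + 1) + 2)" using gist_loop_queries[OF L V] .
  moreover have "length ds = card (gist_D V dst e)" using distinct_card[OF ds(1)] ds(2) by simp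
  ultimately show ?thesis using q by simp
qed

lemma greedy_threshold_approx:
  assumes inst: "mdms_instance V dst g lam k" and "0 \<le> e"
    and A: "A \<subseteq> V" "card A \<le> k" and d: "0 \<le> d" "2 * d \<le> div_mm V dst A"
      "div_mm V dst A \<le> 2 * (1 + e) * d"
    and T: "greedy_indep_set V g dst d k T q"
  shows "mdms_f V dst g lam A \<le> (2 + 2 * e) * mdms_f V dst g lam T"
proof -
  note V = mdms_instanceD[OF inst]
  have "T \<subseteq> V" using greedy_indep_set_feasible_queries(1)[OF T V(1)] .
  have "finite A" using A(1) V(1) by (rule finite_subset)
  have "separated dst (2 * d) A" using separated_mono[OF separated_div_mm[OF \<open>finite A\<close>] d(2)] .
  then have "g A \<le> 2 * g T" using greedy_indep_set_half[OF V(4,3) d(1) V(1) A _ T] by simp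
  moreover have "0 \<le> g T" using nms_nonneg[OF V(4) \<open>T \<subseteq> V\<close>] .
  moreover have "d \<le> div_mm V dst T"
  proof (rule div_mm_ge)
    show "finite T" using \<open>T \<subseteq> V\<close> V(1) by (rule finite_subset)
    show "separated dst d T" using greedy_indep_set_separated[OF T V(1,3)] .
    show "d \<le> dmax V dst" using d div_mm_le_dmax[OF V(1) A(1), of dst] by linarith
  qed
  then have "lam * div_mm V dst A \<le> (2 + 2 * e) * (lam * div_mm V dst T)"
  proof -
    have "lam * div_mm V dst A \<le> lam * (2 * (1 + e) * d)" using mult_left_mono[OF d(3) V(5)] .
    also have "\<dots> \<le> lam * (2 * (1 + e) * div_mm V dst T)"
      using \<open>d \<le> div_mm V dst T\<close> \<open>0 \<le> e\<close> V(5) by (intro mult_left_mono) auto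
    finally show ?thesis by (simp add: algebra_simps)
  qed
  moreover have "0 \<le> e * g T" using \<open>0 \<le> e\<close> \<open>0 \<le> g T\<close> by simp
  ultimately show ?thesis unfolding mdms_f_def by (simp add: algebra_simps)
qed

lemma gist_approx:
  assumes inst: "mdms_instance V dst g lam k" and "0 < e" and G: "gist V g dst lam k e S q"
    and A: "A \<subseteq> V" "card A \<le> k"
  shows "mdms_f V dst g lam A \<le> (2 + 2 * e) * mdms_f V dst g lam S"
proof -
  let ?f = "mdms_f V dst g lam"
  note V = mdms_instanceD[OF inst]
  have fS: "0 \<le> ?f S" using mdms_f_lower_bounds(3)[OF inst gist_feasible(1)[OF inst G]] .
  show ?thesis
  proof (cases "div_mm V dst A \<le> e * dmax V dst")
    case True
    obtain T qT where T: "greedy_indep_set V g dst 0 k T qT" "?f T \<le> ?f S"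
      using gist_dominates_greedy[OF inst G] by blast
    have "g A \<le> 2 * g T"
      using greedy_indep_set_half[OF V(4,3) _ V(1) A _ T(1)] separated_zero[OF V(3) A(1)] by simp
    also have "\<dots> \<le> 2 * ?f S"
      using mdms_f_lower_bounds(1)[OF inst greedy_indep_set_feasible_queries(1)[OF T(1) V(1)]] T(2)
      by simp
    finally have "g A \<le> 2 * ?f S" .
    moreover have "lam * div_mm V dst A \<le> e * ?f S"
    proof -
      have "lam * div_mm V dst A \<le> lam * (e * dmax V dst)" using mult_left_mono[OF True V(5)] .
      also have "\<dots> = e * (lam * dmax V dst)" by simp
      also have "\<dots> \<le> e * ?f S" using gist_lam_dmax_le[OF inst G] \<open>0 < e\<close> by simp
      finally show ?thesis .
    qed
    moreover have "?f A = g A + lam * div_mm V dst A" unfolding mdms_f_def ..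
    moreover have "(2 + 2 * e) * ?f S = 2 * ?f S + 2 * (e * ?f S)" by (simp add: algebra_simps)
    ultimately show ?thesis using mult_nonneg_nonneg[OF _ fS, of e] \<open>0 < e\<close> by linarith
  next
    case False
    obtain d where d: "d \<in> gist_D V dst e" "0 \<le> d" "2 * d \<le> div_mm V dst A"
      "div_mm V dst A < 2 * (1 + e) * d"
      using gist_threshold_bracket[OF \<open>0 < e\<close> dmax_nonneg[OF V(1-3)]] False
        div_mm_le_dmax[OF V(1) A(1)] by (metis not_le)
    obtain T qT where T: "greedy_indep_set V g dst d k T qT" "?f T \<le> ?f S"
      using gist_dominates_greedy[OF inst G] d(1) by blast
    have "?f A \<le> (2 + 2 * e) * ?f T"
      using greedy_threshold_approx[OF inst _ A d(2,3) _ T(1)] d(4) \<open>0 < e\<close> by simp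
    also have "\<dots> \<le> (2 + 2 * e) * ?f S" using T(2) \<open>0 < e\<close> by simp
    finally show ?thesis .
  qed
qed

lemma half_minus_scaled_le:
  fixes a b e :: real
  assumes "0 \<le> a" "0 \<le> b" "0 < e" "a \<le> (2 + 2 * e) * b"
  shows "(1/2 - e) * a \<le> b"
proof (cases "e \<le> 1/2")
  case True
  then have "(1/2 - e) * a \<le> (1/2 - e) * ((2 + 2 * e) * b)" using assms by (intro mult_left_mono) auto
  also have "\<dots> = b - e * b - 2 * e * (e * b)" by (simp add: algebra_simps)
  also have "\<dots> \<le> b" using assms mult_nonneg_nonneg[of e b] mult_nonneg_nonneg[of e "e * b"] by linarith
  finally show ?thesis .
next
  case False
  then have "(1/2 - e) * a \<le> 0" using assms by (simp add: mult_nonpos_nonneg)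
  then show ?thesis using assms by linarith
qed

lemma gist_approx_opt:
  assumes inst: "mdms_instance V dst g lam k" and "0 < e" and G: "gist V g dst lam k e S q"
  shows "(1/2 - e) * mdms_opt V dst g lam k \<le> mdms_f V dst g lam S"
proof -
  obtain A where A: "A \<subseteq> V" "card A \<le> k" "mdms_f V dst g lam A = mdms_opt V dst g lam k"
    using mdms_opt_attained[OF mdms_instanceD(1)[OF inst]] .
  show ?thesis
    using half_minus_scaled_le[OF mdms_f_lower_bounds(3)[OF inst A(1)]
        mdms_f_lower_bounds(3)[OF inst gist_feasible(1)[OF inst G]] \<open>0 < e\<close>
        gist_approx[OF inst \<open>0 < e\<close> G A(1,2)]] A(3) by simp
qed

lemma gist_query_bound:
  assumes inst: "mdms_instance V dst g lam k" and e: "0 < e" "e \<le> 1/2"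
    and G: "gist V g dst lam k e S q"
  shows "real q \<le> 16 * real (card V) * real k * log (1 + e) (1 / e)"
proof -
  let ?n = "card V" and ?L = "log (1 + e) (1 / e)"
  note V = mdms_instanceD[OF inst]
  have "1 \<le> ?n" using V(1,2) by (simp add: Suc_leI card_gt_0_iff)
  then have "k * 1 \<le> k * ?n" "1 * 1 \<le> k * ?n"
    by (rule mult_le_mono2, rule mult_le_mono[OF V(6)])
  moreover have "k * (?n + 1) + 2 = k * ?n + k + 2" "4 * k * ?n = 4 * (k * ?n)"
    by (simp_all add: algebra_simps)
  ultimately have A: "k * (?n + 1) + 2 \<le> 4 * k * ?n" by linarith
  have D: "real (card (gist_D V dst e)) + 1 \<le> 4 * ?L"
    using card_gist_D_le[OF e, of V dst] one_le_log_inverse[OF e] by linarith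
  have "real q \<le> real ((card (gist_D V dst e) + 1) * (k * (?n + 1) + 2))"
    using gist_queries[OF inst G] by (simp only: of_nat_le_iff)
  also have "\<dots> = (real (card (gist_D V dst e)) + 1) * real (k * (?n + 1) + 2)"
    by (simp only: of_nat_mult of_nat_add of_nat_1)
  also have "\<dots> \<le> (4 * ?L) * real (4 * k * ?n)"
  proof (rule mult_mono)
    show "real (k * (?n + 1) + 2) \<le> real (4 * k * ?n)" using A by (simp only: of_nat_le_iff)
  qed (use D one_le_log_inverse[OF e] in simp_all)
  also have "\<dots> = 16 * real ?n * real k * ?L" by simp
  finally show ?thesis .
qed

theorem theorem3p1:
  shows "(\<forall>(V::'a set) dst g lam k \<epsilon>. mdms_instance V dst g lam k \<and> \<epsilon> > 0 \<longrightarrow>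
            (\<exists>S q. gist V g dst lam k \<epsilon> S q) \<and>
            (\<forall>S q. gist V g dst lam k \<epsilon> S q \<longrightarrow>
               S \<subseteq> V \<and> card S \<le> k \<and>
               mdms_f V dst g lam S \<ge> (1/2 - \<epsilon>) * mdms_opt V dst g lam k))
       \<and> (\<exists>C::real. \<forall>(V::'a set) dst g lam k \<epsilon> S q.
            mdms_instance V dst g lam k \<and> 0 < \<epsilon> \<and> \<epsilon> \<le> 1/2 \<and> gist V g dst lam k \<epsilon> S q \<longrightarrow>
            real q \<le> C * real (card V) * real k * log (1 + \<epsilon>) (1 / \<epsilon>))"
proof (intro conjI allI impI)
  fix V :: "'a set" and dst g lam k and \<epsilon> :: real
  assume "mdms_instance V dst g lam k \<and> \<epsilon> > 0"
  then have inst: "mdms_instance V dst g lam k" and e: "0 < \<epsilon>" by auto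
  show "\<exists>S q. gist V g dst lam k \<epsilon> S q" using gist_exists[OF inst e] .
  fix S q assume G: "gist V g dst lam k \<epsilon> S q"
  show "S \<subseteq> V" "card S \<le> k" using gist_feasible[OF inst G] .
  show "(1/2 - \<epsilon>) * mdms_opt V dst g lam k \<le> mdms_f V dst g lam S"
    using gist_approx_opt[OF inst e G] .
next
  show "\<exists>C::real. \<forall>(V::'a set) dst g lam k \<epsilon> S q.
      mdms_instance V dst g lam k \<and> 0 < \<epsilon> \<and> \<epsilon> \<le> 1/2 \<and> gist V g dst lam k \<epsilon> S q \<longrightarrow>
      real q \<le> C * real (card V) * real k * log (1 + \<epsilon>) (1 / \<epsilon>)"
    using gist_query_bound by blast
qed

end
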